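(* Let $(\mathcal{U},f,g,\preccurlyeq)$ be a fault-tolerance partially ordered $(m,n)$-semiring as described in the context, and let $x_1,\ldots,x_m,y_1,\ldots,y_n\in\mathcal{U}$ be disjoint components. Then (i) $x_i\preccurlyeq f(x_1,x_2,\ldots,x_m)$ for every $1\le i\le m$; (ii) $g(y_1,y_2,\ldots,y_n)\preccurlyeq y_j$ for every $1\le j\le n$.
   Context: Notation: $x_i^j$ denotes $x_i,\ldots,x_j$. $(\mathcal{U},f,g)$ is an $(m,n)$-semiring: $f$ is an associative $m$-ary and $g$ an associative $n$-ary operation on $\mathcal{U}$ (associativity of a $k$-ary $h$: $h(x_1^{i-1},h(x_i^{k+i-1}),x_{k+i}^{2k-1})=h(x_1^{j-1},h(x_j^{k+j-1}),x_{k+j}^{2k-1})$ for $1\le i\le j\le k$), and $g$ distributes over $f$ in every position. $\mathcal{U}$ is interpreted as a set of systems; $f(x_1^m)$ is the system that fails when any $x_i$ fails, $g(y_1^n)$ the system that fails only when all $y_j$ fail; elements are assumed to be disjoint components (failing independently), which imposes no further algebraic condition. $\mathbf{0}\in\mathcal{U}$ (the always-up system) is an $f$-identity ($f(\mathbf{0},\ldots,x,\ldots,\mathbf{0})=x$ in every position) and $\mathbf{1}$ (the always-down system) is a $g$-identity; moreover $g(y_1^{j-1},\mathbf{0},y_{j+1}^n)=\mathbf{0}$ and $f(x_1^{i-1},\mathbf{1},x_{i+1}^m)=\mathbf{1}$ for all arguments and positions. $\preccurlyeq$ is a partial order on $\mathcal{U}$ ("fault-tolerance partial order") such that $(\mathcal{U},f,g,\preccurlyeq)$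 is a partially ordered $(m,n)$-semiring: $a\preccurlyeq b$ implies $f(x_1^{i-1},a,x_{i+1}^m)\preccurlyeq f(x_1^{i-1},b,x_{i+1}^m)$ and $g(y_1^{j-1},a,y_{j+1}^n)\preccurlyeq g(y_1^{j-1},b,y_{j+1}^n)$ for all arguments and all positions; and $\mathbf{0}\preccurlyeq a\preccurlyeq\mathbf{1}$ for all $a\in\mathcal{U}$. *)

theory Defs
  imports Main
begin

text \<open>A k-ary operation on the carrier type 'a is modelled as a function on lists,
  meant to be applied to lists of length k. Positions are 0-based.\<close>

definition assoc_op :: "nat \<Rightarrow> ('a list \<Rightarrow> 'a) \<Rightarrow> bool" where
  "assoc_op k h \<longleftrightarrow>
     (\<forall>xs i j. length xs = 2 * k - 1 \<and> i \<le> j \<and> j < k \<longrightarrow>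
        h (take i xs @ [h (take k (drop i xs))] @ drop (i + k) xs) =
        h (take j xs @ [h (take k (drop j xs))] @ drop (j + k) xs))"

definition mn_semiring :: "nat \<Rightarrow> nat \<Rightarrow> ('a list \<Rightarrow> 'a) \<Rightarrow> ('a list \<Rightarrow> 'a) \<Rightarrow> bool" where
  "mn_semiring m n f g \<longleftrightarrow>
     2 \<le> m \<and> 2 \<le> n \<and> assoc_op m f \<and> assoc_op n g \<and>
     (\<forall>ys xs j. length ys = n \<and> length xs = m \<and> j < n \<longrightarrow>
        g (ys[j := f xs]) = f (map (\<lambda>x. g (ys[j := x])) xs))"

text \<open>Fault-tolerance partially ordered (m,n)-semiring with constants zero (always-up
  system) and one (always-down system).\<close>
definition ft_po_mn_semiring ::
  "nat \<Rightarrow> nat \<Rightarrow> ('a list \<Rightarrow> 'a) \<Rightarrow> ('a list \<Rightarrow> 'a) \<Rightarrow> ('a \<Rightarrow> 'a \<Rightarrow> bool) \<Rightarrow> 'a \<Rightarrow> 'a \<Rightarrow> bool" where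
  "ft_po_mn_semiring m n f g le zero one \<longleftrightarrow>
     mn_semiring m n f g \<and>
     \<comment> \<open>zero is an f-identity, one is a g-identity\<close>
     (\<forall>x i. i < m \<longrightarrow> f ((replicate m zero)[i := x]) = x) \<and>
     (\<forall>y j. j < n \<longrightarrow> g ((replicate n one)[j := y]) = y) \<and>
     \<comment> \<open>zero absorbs for g, one absorbs for f\<close>
     (\<forall>ys j. length ys = n \<and> j < n \<longrightarrow> g (ys[j := zero]) = zero) \<and>
     (\<forall>xs i. length xs = m \<and> i < m \<longrightarrow> f (xs[i := one]) = one) \<and>
     \<comment> \<open>le is a partial order\<close>
     (\<forall>a. le a a) \<and> (\<forall>a b. le a b \<and> le b a \<longrightarrow> a = b) \<and>
     (\<forall>a b c. le a b \<and> le b c \<longrightarrow> le a c) \<and>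
     \<comment> \<open>monotonicity of f and g in every position\<close>
     (\<forall>a b xs i. le a b \<and> length xs = m \<and> i < m \<longrightarrow> le (f (xs[i := a])) (f (xs[i := b]))) \<and>
     (\<forall>a b ys j. le a b \<and> length ys = n \<and> j < n \<longrightarrow> le (g (ys[j := a])) (g (ys[j := b]))) \<and>
     \<comment> \<open>bounds\<close>
     (\<forall>a. le zero a \<and> le a one)"

end

theory Submission
  imports Defs
begin

text \<open>Since \<open>f\<close> is monotone in each argument and \<open>zero\<close> is least, raising the
  arguments of \<open>f (zero, \<dots>, x\<^sub>i, \<dots>, zero) = x\<^sub>i\<close> one at a time to
  \<open>x\<^sub>1, \<dots>, x\<^sub>m\<close> can only increase the value, so \<open>x\<^sub>i \<preccurlyeq> f (x\<^sub>1, \<dots>, x\<^sub>m)\<close>.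
  Part (ii) is the same argument for \<open>g\<close> in the dual order, where \<open>one\<close> is least.\<close>

lemma pointwise_le_imp_le_app:
  fixes F :: "'a list \<Rightarrow> 'a" and le :: "'a \<Rightarrow> 'a \<Rightarrow> bool"
  assumes refl: "\<forall>a. le a a"
    and trans: "\<forall>a b c. le a b \<and> le b c \<longrightarrow> le a c"
    and mono: "\<forall>a b zs i. le a b \<and> length zs = m \<and> i < m \<longrightarrow> le (F (zs[i := a])) (F (zs[i := b]))"
    and len: "length ws = m" "length xs = m"
    and le_nth: "\<forall>p < m. le (ws ! p) (xs ! p)"
  shows "le (F ws) (F xs)"
proof -
  have "le (F ws) (F (take k xs @ drop k ws))" if "k \<le> m" for k
    using that
  proof (induction k)
    case 0
    then show ?case using refl by simp
  next
    case (Suc k)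
    define zs where "zs = take k xs @ drop k ws"
    have k: "k < m" using Suc.prems by simp
    have drop_ws: "drop k ws = ws ! k # drop (Suc k) ws"
      using k len by (simp add: Cons_nth_drop_Suc)
    have zs_len: "length zs = m" using k len by (simp add: zs_def)
    have "zs[k := ws ! k] = zs"
      using k len by (simp add: zs_def drop_ws list_update_append)
    moreover have "zs[k := xs ! k] = take (Suc k) xs @ drop (Suc k) ws"
      using k len by (simp add: zs_def drop_ws list_update_append take_Suc_conv_app_nth)
    moreover have "le (F (zs[k := ws ! k])) (F (zs[k := xs ! k]))"
      using mono le_nth k zs_len by blast
    ultimately have "le (F zs) (F (take (Suc k) xs @ drop (Suc k) ws))"
      by simp
    moreover have "le (F ws) (F zs)" using Suc by (simp add: zs_def)
    ultimately show ?case using trans by blast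
  qed
  from this[of m] show ?thesis using len by simp
qed

theorem lemma3:
  fixes f g :: "'a list \<Rightarrow> 'a" and le :: "'a \<Rightarrow> 'a \<Rightarrow> bool" and zero one :: 'a
    and m n :: nat and xs ys :: "'a list"
  assumes "ft_po_mn_semiring m n f g le zero one"
    and "length xs = m" and "length ys = n"
  shows "(\<forall>i < m. le (xs ! i) (f xs)) \<and> (\<forall>j < n. le (g ys) (ys ! j))"
proof -
  from assms(1)[unfolded ft_po_mn_semiring_def]
  obtain f_unit: "\<forall>x i. i < m \<longrightarrow> f ((replicate m zero)[i := x]) = x"
    and g_unit: "\<forall>y j. j < n \<longrightarrow> g ((replicate n one)[j := y]) = y"
    and refl: "\<forall>a. le a a"
    and trans: "\<forall>a b c. le a b \<and> le b c \<longrightarrow> le a c"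
    and f_mono: "\<forall>a b xs i. le a b \<and> length xs = m \<and> i < m \<longrightarrow> le (f (xs[i := a])) (f (xs[i := b]))"
    and g_mono: "\<forall>a b ys j. le a b \<and> length ys = n \<and> j < n \<longrightarrow> le (g (ys[j := a])) (g (ys[j := b]))"
    and bounds: "\<forall>a. le zero a \<and> le a one"
    by (elim conjE) assumption
  have "le (xs ! i) (f xs)" if i: "i < m" for i
  proof -
    have "\<forall>p < m. le (((replicate m zero)[i := xs ! i]) ! p) (xs ! p)"
      using assms(2) i bounds refl by (simp add: nth_list_update)
    then have "le (f ((replicate m zero)[i := xs ! i])) (f xs)"
      using pointwise_le_imp_le_app[OF refl trans f_mono _ assms(2)] assms(2) by simp
    then show ?thesis using f_unit i by simp
  qed
  moreover have "le (g ys) (ys ! j)" if j: "j < n" for j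
  proof -
    let ?ge = "\<lambda>a b. le b a"
    have ge_refl: "\<forall>a. ?ge a a" and ge_trans: "\<forall>a b c. ?ge a b \<and> ?ge b c \<longrightarrow> ?ge a c"
      and g_antimono: "\<forall>a b zs i. ?ge a b \<and> length zs = n \<and> i < n \<longrightarrow> ?ge (g (zs[i := a])) (g (zs[i := b]))"
      using refl trans g_mono by blast+
    have "\<forall>p < n. ?ge (((replicate n one)[j := ys ! j]) ! p) (ys ! p)"
      using assms(3) j bounds refl by (simp add: nth_list_update)
    then have "?ge (g ((replicate n one)[j := ys ! j])) (g ys)"
      using pointwise_le_imp_le_app[OF ge_refl ge_trans g_antimono _ assms(3)] assms(3) by simp
    then show ?thesis using g_unit j by simp
  qed
  ultimately show ?thesis by blast
qed

end
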